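(* Let $K\ge 1$ be an integer, let $h_1,\dots,h_K>0$ and $\sigma^2>0$ be real numbers, and let $0<\epsilon<K$. For $g\in\mathbb{R}$ and $b\in\mathbb{R}^K$ let $\mathsf{MSE}(g,b)=\sum_{k=1}^{K}(g h_k b_k-1)^2+\sigma^2 g^2$ and $\mathsf{PW}(b)=\sum_{k=1}^K b_k^2$. Consider the problem of minimizing $\mathsf{PW}(b)$ over $g\in\mathbb{R}$, $b\in\mathbb{R}^K$ subject to $\mathsf{MSE}(g,b)\le\epsilon$. Put $c_k=1/h_k^2$. Then the equation $$M=\frac{\sum_{k=1}^{K}c_k\left(\frac{M}{c_k+M}\right)^2}{\epsilon-\sum_{k=1}^{K}\left(\frac{c_k}{c_k+M}\right)^2}$$ has a unique solution $M\in(0,\infty)$, and with $\tau_k=\dfrac{1}{1+M h_k^2}$ (so that $\sum_k\tau_k^2<\epsilon$), the problem has minimum value $$\mathsf{PW}^\star=\sigma^2\,\frac{\sum_{k=1}^{K}(1-\tau_k)^2/h_k^2}{\epsilon-\sum_{k=1}^{K}\tau_k^2},$$ attained at $$g^\star=\frac{1}{\sigma}\sqrt{\epsilon-\sum_{k=1}^{K}\tau_k^2},\qquad b_k^\star=\frac{\sigma M h_k}{(1+M h_k^2)\sqrt{\epsilon-\sum_{j=1}^{K}\tau_j^2}},\quad k=1,\dots,K.$$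
   Context: This models an over-the-air computation system with $K$ sensors: $h_k$ is the channel coefficient magnitude of sensor $k$, $b_k$ its transmit scaling factor, $g$ the receiver scaling factor, $\sigma^2$ the receiver noise variance and $\epsilon$ a limit on the computation mean-squared error. All variables are real, $h_k>0$, $\sigma=\sqrt{\sigma^2}>0$. *)

theory Defs
  imports Complex_Main
begin

definition MSE :: "nat \<Rightarrow> (nat \<Rightarrow> real) \<Rightarrow> real \<Rightarrow> real \<Rightarrow> (nat \<Rightarrow> real) \<Rightarrow> real" where
  "MSE K h sigma2 g b = (\<Sum>k=1..K. (g * h k * b k - 1)^2) + sigma2 * g^2"

definition PW :: "nat \<Rightarrow> (nat \<Rightarrow> real) \<Rightarrow> real" where
  "PW K b = (\<Sum>k=1..K. (b k)^2)"

definition M_eq :: "nat \<Rightarrow> (nat \<Rightarrow> real) \<Rightarrow> real \<Rightarrow> real \<Rightarrow> bool" where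
  "M_eq K h eps M \<longleftrightarrow>
     M = (\<Sum>k=1..K. (1 / (h k)^2) * (M / (1 / (h k)^2 + M))^2)
         / (eps - (\<Sum>k=1..K. ((1 / (h k)^2) / (1 / (h k)^2 + M))^2))"

end

theory Submission
  imports Defs
begin

text \<open>Writing \<open>\<tau>\<^sub>k = 1/(1 + M h\<^sub>k\<^sup>2)\<close>, the fixed-point equation for \<open>M\<close> says exactly
  \<open>\<Sum>\<^sub>k \<tau>\<^sub>k = \<epsilon>\<close>; the left-hand side decreases strictly from \<open>K\<close> to \<open>0\<close>, so \<open>M\<close> exists
  and is unique. Completing the square in \<open>x = g h\<^sub>k b\<^sub>k\<close> gives, for every sensor,
  \<open>M \<tau>\<^sub>k \<le> g\<^sup>2 b\<^sub>k\<^sup>2 + M (g h\<^sub>k b\<^sub>k - 1)\<^sup>2\<close>. Summing and using the MSE constraint yields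
  \<open>M \<epsilon> \<le> g\<^sup>2 PW(b) + M (\<epsilon> - \<sigma>\<^sup>2 g\<^sup>2)\<close>, i.e. \<open>\<sigma>\<^sup>2 M \<le> PW(b)\<close> (the constraint forces
  \<open>g \<noteq> 0\<close>). The stated \<open>(g\<^sup>\<star>, b\<^sup>\<star>)\<close> meets the constraint with equality and has
  power \<open>\<sigma>\<^sup>2 M\<close>, which is the closed form \<open>PW\<^sup>\<star>\<close>.\<close>

definition tau :: "(nat \<Rightarrow> real) \<Rightarrow> real \<Rightarrow> nat \<Rightarrow> real" where
  "tau h M k = 1 / (1 + M * (h k)^2)"

lemma one_add_mult_square_pos: "(M::real) \<ge> 0 \<Longrightarrow> 1 + M * x^2 > 0"
  by (intro add_pos_nonneg) auto

lemma tau_pos: "M \<ge> 0 \<Longrightarrow> tau h M k > 0"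
  by (simp add: tau_def one_add_mult_square_pos)

lemma tau_less_one: "M > 0 \<Longrightarrow> h k \<noteq> 0 \<Longrightarrow> tau h M k < 1"
  by (simp add: tau_def add_pos_pos)

lemma tau_strict_antimono:
  assumes "0 \<le> x" "x < y" "h k \<noteq> 0"
  shows "tau h y k < tau h x k"
proof -
  have "x * (h k)^2 < y * (h k)^2" using assms by simp
  then show ?thesis
    unfolding tau_def using one_add_mult_square_pos[OF assms(1), of "h k"]
    by (intro divide_strict_left_mono) auto
qed

lemma one_minus_tau: "M \<ge> 0 \<Longrightarrow> 1 - tau h M k = M * (h k)^2 * tau h M k"
  using one_add_mult_square_pos[of M "h k"] by (simp add: tau_def field_simps)

lemma tau_residual:
  assumes "M \<ge> 0" "h k \<noteq> 0"
  shows "(1 - tau h M k)^2 / (h k)^2 = M * tau h M k - M * (tau h M k)^2"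
proof -
  have "(1 - tau h M k)^2 / (h k)^2 = M * (M * (h k)^2 * tau h M k) * tau h M k"
    using assms by (simp add: one_minus_tau power2_eq_square)
  also have "\<dots> = M * (1 - tau h M k) * tau h M k"
    using assms by (simp add: one_minus_tau)
  also have "\<dots> = M * tau h M k - M * (tau h M k)^2"
    by (simp add: algebra_simps power2_eq_square)
  finally show ?thesis .
qed

lemma sum_tau_strict_antimono:
  assumes "finite A" "A \<noteq> {}" "\<And>k. k \<in> A \<Longrightarrow> h k \<noteq> 0" "0 \<le> x" "x < y"
  shows "(\<Sum>k\<in>A. tau h y k) < (\<Sum>k\<in>A. tau h x k)"
  using assms by (intro sum_strict_mono tau_strict_antimono) auto

lemma sum_tau_sq_less:
  assumes "finite A" "A \<noteq> {}" "\<And>k. k \<in> A \<Longrightarrow> h k \<noteq> 0" "M > 0"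
  shows "(\<Sum>k\<in>A. (tau h M k)^2) < (\<Sum>k\<in>A. tau h M k)"
proof (rule sum_strict_mono)
  fix k assume "k \<in> A"
  then have "0 < tau h M k" "tau h M k < 1"
    using assms tau_pos tau_less_one by (auto simp: less_imp_le)
  then show "(tau h M k)^2 < tau h M k"
    using mult_strict_left_mono[of "tau h M k" 1] by (simp add: power2_eq_square)
qed (use assms in auto)

lemma sum_tau_below:
  assumes "finite A" "A \<noteq> {}" "\<And>k. k \<in> A \<Longrightarrow> h k \<noteq> 0" "eps > 0"
  obtains M where "M > 0" "(\<Sum>k\<in>A. tau h M k) \<le> eps"
proof -
  define C where "C = (\<Sum>k\<in>A. 1 / (h k)^2)"
  have "C > 0" unfolding C_def using assms by (intro sum_pos) auto
  define M where "M = C / eps + 1"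
  have M: "M > 0" using \<open>C > 0\<close> assms(4) by (simp add: M_def add_pos_pos)
  have "(\<Sum>k\<in>A. tau h M k) < (\<Sum>k\<in>A. 1 / (M * (h k)^2))"
    unfolding tau_def using assms M
    by (intro sum_strict_mono divide_strict_left_mono) (auto intro!: mult_pos_pos add_pos_pos)
  also have "\<dots> = C / M" by (simp add: C_def sum_divide_distrib mult.commute)
  also have "\<dots> \<le> eps"
    using M assms(4) by (simp add: M_def field_simps)
  finally show ?thesis using M that by simp
qed

lemma sum_tau_eq_exists:
  assumes "finite A" "\<And>k. k \<in> A \<Longrightarrow> h k \<noteq> 0" "0 < eps" "eps < real (card A)"
  shows "\<exists>M>0. (\<Sum>k\<in>A. tau h M k) = eps"
proof -
  let ?f = "\<lambda>M. \<Sum>k\<in>A. tau h M k"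
  have "A \<noteq> {}" using assms(3,4) by auto
  obtain M1 where M1: "M1 > 0" "?f M1 \<le> eps"
    using sum_tau_below[of A h eps] assms(1-3) \<open>A \<noteq> {}\<close> by auto
  have f0: "eps \<le> ?f 0" using assms(4) by (simp add: tau_def)
  have "\<forall>x. 0 \<le> x \<and> x \<le> M1 \<longrightarrow> isCont ?f x"
  proof (intro allI impI)
    fix x :: real assume "0 \<le> x \<and> x \<le> M1"
    then have "1 + x * (h k)^2 \<noteq> 0" for k using one_add_mult_square_pos[of x "h k"] by simp
    then show "isCont ?f x" unfolding tau_def by (intro continuous_intros) auto
  qed
  then obtain M where M: "0 \<le> M" "M \<le> M1" "?f M = eps"
    using IVT2[of ?f M1 eps 0, OF M1(2) f0] M1(1) by auto
  have "M \<noteq> 0" using M(3) assms(4) by (auto simp: tau_def)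
  then show ?thesis using M by (intro exI[of _ M]) auto
qed

lemma sum_tau_eq_unique:
  assumes "finite A" "\<And>k. k \<in> A \<Longrightarrow> h k \<noteq> 0" "0 < eps" "eps < real (card A)"
  shows "\<exists>!M. M > 0 \<and> (\<Sum>k\<in>A. tau h M k) = eps"
proof -
  have "A \<noteq> {}" using assms(3,4) by auto
  obtain M where M: "M > 0" "(\<Sum>k\<in>A. tau h M k) = eps"
    using sum_tau_eq_exists[of A h eps] assms by blast
  show ?thesis
  proof (rule ex1I[of _ M])
    fix y assume y: "y > 0 \<and> (\<Sum>k\<in>A. tau h y k) = eps"
    have "\<not> y < M" using sum_tau_strict_antimono[of A h y M] assms(1,2) \<open>A \<noteq> {}\<close> M y by auto
    moreover have "\<not> M < y" using sum_tau_strict_antimono[of A h M y] assms(1,2) \<open>A \<noteq> {}\<close> M y by auto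
    ultimately show "y = M" by simp
  qed (use M in simp)
qed

lemma M_eq_iff_sum_tau:
  assumes "K \<ge> 1" "\<And>k. k \<in> {1..K} \<Longrightarrow> h k \<noteq> 0" "M > 0"
  shows "M_eq K h eps M \<longleftrightarrow> (\<Sum>k=1..K. tau h M k) = eps"
proof -
  let ?T = "\<Sum>k=1..K. tau h M k" and ?S = "\<Sum>k=1..K. (tau h M k)^2"
  let ?A = "\<Sum>k=1..K. (1 / (h k)^2) * (M / (1 / (h k)^2 + M))^2"
  let ?B = "\<Sum>k=1..K. ((1 / (h k)^2) / (1 / (h k)^2 + M))^2"
  have c: "1 / (h k)^2 + M = (1 + M * (h k)^2) / (h k)^2" if "k \<in> {1..K}" for k
    using assms that by (simp add: field_simps)
  have B: "?B = ?S"
    using assms c one_add_mult_square_pos[of M] by (intro sum.cong) (auto simp: tau_def)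
  have "M / (1 / (h k)^2 + M) = 1 - tau h M k" if "k \<in> {1..K}" for k
    using c[OF that] one_add_mult_square_pos[of M "h k"] assms(2)[OF that] assms(3)
    by (simp add: one_minus_tau tau_def field_simps)
  then have "?A = (\<Sum>k=1..K. (1 - tau h M k)^2 / (h k)^2)"
    by (intro sum.cong) auto
  also have "\<dots> = M * ?T - M * ?S"
    using assms by (simp add: tau_residual sum_subtractf sum_distrib_left)
  finally have A: "?A = M * ?T - M * ?S" .
  have S_less: "?S < ?T" using assms by (intro sum_tau_sq_less) auto
  show ?thesis
  proof
    assume "M_eq K h eps M"
    then have e: "M = ?A / (eps - ?B)" unfolding M_eq_def .
    then have "eps - ?B \<noteq> 0" using assms(3) by auto
    then have "M * (eps - ?S) = M * ?T - M * ?S" using e A B by (simp add: field_simps)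
    then show "?T = eps" using assms(3) by (simp add: algebra_simps)
  next
    assume T: "?T = eps"
    have "eps - ?B > 0" using S_less T B by simp
    moreover have "?A = M * (eps - ?B)" using A B T by (simp add: algebra_simps)
    ultimately show "M_eq K h eps M" unfolding M_eq_def by simp
  qed
qed

text \<open>Completing the square in \<open>x\<close>: the difference is
  \<open>((1 + M h\<^sup>2) x - M h\<^sup>2)\<^sup>2 / (h\<^sup>2 (1 + M h\<^sup>2))\<close>.\<close>

lemma tau_le_completed_square:
  fixes h M x :: real
  assumes "h \<noteq> 0" "M \<ge> 0"
  shows "M / (1 + M * h^2) \<le> x^2 / h^2 + M * (x - 1)^2"
proof -
  have p: "1 + M * h^2 > 0" using one_add_mult_square_pos[OF assms(2), of h] .
  have "x^2 / h^2 + M * (x - 1)^2 - M / (1 + M * h^2)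
        = ((1 + M * h^2) * x - M * h^2)^2 / (h^2 * (1 + M * h^2))"
    using assms p by (simp add: field_simps power2_eq_square)
  also have "\<dots> \<ge> 0" using p by simp
  finally show ?thesis by linarith
qed

lemma PW_lower_bound:
  assumes h: "\<And>k. k \<in> {1..K} \<Longrightarrow> h k \<noteq> 0" and M: "M > 0"
    and sum_tau: "(\<Sum>k=1..K. tau h M k) = eps" and eps: "eps < real K"
    and mse: "MSE K h sigma2 g b \<le> eps"
  shows "sigma2 * M \<le> PW K b"
proof -
  let ?E = "\<Sum>k=1..K. (g * h k * b k - 1)^2"
  have "g \<noteq> 0" using mse eps by (auto simp: MSE_def)
  have "M * tau h M k - M * (g * h k * b k - 1)^2 \<le> (g * b k)^2" if "k \<in> {1..K}" for k
    using tau_le_completed_square[of "h k" M "g * h k * b k"] h[OF that] M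
    by (simp add: tau_def power_mult_distrib)
  then have "(\<Sum>k=1..K. M * tau h M k - M * (g * h k * b k - 1)^2) \<le> (\<Sum>k=1..K. (g * b k)^2)"
    by (rule sum_mono)
  then have "M * eps - M * ?E \<le> g^2 * PW K b"
    by (simp add: sum_tau[symmetric] PW_def sum_subtractf sum_distrib_left power_mult_distrib)
  moreover have "M * (sigma2 * g^2) \<le> M * (eps - ?E)"
    using mse M unfolding MSE_def by (intro mult_left_mono) auto
  ultimately have "g^2 * (sigma2 * M) \<le> g^2 * PW K b" by (simp add: algebra_simps)
  then show ?thesis using \<open>g \<noteq> 0\<close> by simp
qed

lemma optimal_design:
  fixes K :: nat and h :: "nat \<Rightarrow> real" and sigma2 eps M :: real
  defines "S \<equiv> \<Sum>k=1..K. (tau h M k)^2"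
  defines "gopt \<equiv> (1 / sqrt sigma2) * sqrt (eps - S)"
    and "bopt \<equiv> \<lambda>k. sqrt sigma2 * M * h k / ((1 + M * (h k)^2) * sqrt (eps - S))"
  assumes K: "K \<ge> 1" and h: "\<And>k. k \<in> {1..K} \<Longrightarrow> h k \<noteq> 0"
    and sigma2: "sigma2 > 0" and eps: "eps < real K"
    and M: "M > 0" and sum_tau: "(\<Sum>k=1..K. tau h M k) = eps"
  shows "S < eps
    \<and> MSE K h sigma2 gopt bopt \<le> eps
    \<and> PW K bopt = sigma2 * (\<Sum>k=1..K. (1 - tau h M k)^2 / (h k)^2) / (eps - S)
    \<and> (\<forall>g b. MSE K h sigma2 g b \<le> eps \<longrightarrow>
          sigma2 * (\<Sum>k=1..K. (1 - tau h M k)^2 / (h k)^2) / (eps - S) \<le> PW K b)"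
proof -
  have "S < (\<Sum>k=1..K. tau h M k)" unfolding S_def using K h M by (intro sum_tau_sq_less) auto
  then have "S < eps" unfolding sum_tau .
  then have root: "sqrt (eps - S) > 0" "(sqrt (eps - S))^2 = eps - S" by auto
  have sigma: "sqrt sigma2 > 0" "(sqrt sigma2)^2 = sigma2" using sigma2 by auto
  have "(\<Sum>k=1..K. (1 - tau h M k)^2 / (h k)^2) = (\<Sum>k=1..K. M * tau h M k - M * (tau h M k)^2)"
    using h M by (intro sum.cong) (auto simp: tau_residual)
  also have "\<dots> = M * (\<Sum>k=1..K. tau h M k) - M * S"
    by (simp add: sum_subtractf sum_distrib_left S_def)
  also have "\<dots> = M * (eps - S)"
    unfolding sum_tau by (simp add: right_diff_distrib)
  finally have residual: "(\<Sum>k=1..K. (1 - tau h M k)^2 / (h k)^2) = M * (eps - S)" .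
  have bopt: "bopt k = sqrt sigma2 / sqrt (eps - S) * ((1 - tau h M k) / h k)"
    if "k \<in> {1..K}" for k
  proof -
    have "(1 - tau h M k) / h k = M * (h k)^2 * tau h M k / h k"
      using M by (simp add: one_minus_tau)
    also have "\<dots> = M * h k / (1 + M * (h k)^2)"
      using h[OF that] by (simp add: tau_def power2_eq_square)
    finally have "(1 - tau h M k) / h k = M * h k / (1 + M * (h k)^2)" .
    then show ?thesis by (simp add: bopt_def ac_simps)
  qed
  have "(\<Sum>k=1..K. (gopt * h k * bopt k - 1)^2) = S"
    unfolding S_def using h sigma(1) root(1)
    by (intro sum.cong) (auto simp: gopt_def bopt power2_commute)
  moreover have "sigma2 * gopt^2 = eps - S"
    using sigma root by (simp add: gopt_def power_mult_distrib power_divide)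
  ultimately have "MSE K h sigma2 gopt bopt = eps" by (simp add: MSE_def)
  moreover have "PW K bopt = sigma2 / (eps - S) * (\<Sum>k=1..K. (1 - tau h M k)^2 / (h k)^2)"
    unfolding PW_def sum_distrib_left using sigma root
    by (intro sum.cong) (auto simp: bopt power_mult_distrib power_divide)
  moreover have "sigma2 * (\<Sum>k=1..K. (1 - tau h M k)^2 / (h k)^2) / (eps - S) = sigma2 * M"
    unfolding residual using \<open>S < eps\<close> by simp
  ultimately show ?thesis
    using \<open>S < eps\<close> PW_lower_bound[OF h M sum_tau eps] by simp
qed

theorem theorem2:
  fixes K :: nat and h :: "nat \<Rightarrow> real" and sigma2 eps :: real
  assumes K: "K \<ge> 1"
    and h: "\<And>k. k \<in> {1..K} \<Longrightarrow> h k > 0"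
    and sigma2: "sigma2 > 0"
    and eps: "0 < eps" "eps < real K"
  shows "(\<exists>!M. M > 0 \<and> M_eq K h eps M) \<and>
    (\<forall>M. M > 0 \<and> M_eq K h eps M \<longrightarrow>
      (let tau = (\<lambda>k. 1 / (1 + M * (h k)^2));
           S = (\<Sum>k=1..K. (tau k)^2);
           sigma = sqrt sigma2;
           PWopt = sigma2 * (\<Sum>k=1..K. (1 - tau k)^2 / (h k)^2) / (eps - S);
           gopt = (1 / sigma) * sqrt (eps - S);
           bopt = (\<lambda>k. sigma * M * h k / ((1 + M * (h k)^2) * sqrt (eps - S)))
       in S < eps
          \<and> MSE K h sigma2 gopt bopt \<le> eps
          \<and> PW K bopt = PWopt
          \<and> (\<forall>g b. MSE K h sigma2 g b \<le> eps \<longrightarrow> PWopt \<le> PW K b)))"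
proof -
  have h_nz: "\<And>k. k \<in> {1..K} \<Longrightarrow> h k \<noteq> 0" using h by force
  have M_eq_iff: "M > 0 \<and> M_eq K h eps M \<longleftrightarrow> M > 0 \<and> (\<Sum>k=1..K. tau h M k) = eps" for M
    using M_eq_iff_sum_tau[of K h M eps] K h_nz by blast
  have "\<exists>!M. M > 0 \<and> (\<Sum>k=1..K. tau h M k) = eps"
    using h_nz eps by (intro sum_tau_eq_unique) auto
  with optimal_design[of K h sigma2 eps, OF K h_nz sigma2 eps(2)] show ?thesis
    unfolding M_eq_iff Let_def tau_def by auto
qed

end
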